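(* Let $v_k$ be a joint configuration and suppose the joint configuration graph contains an optimal (minimum-cost collision-free) joint path $\pi_*(v_k,v_F)$ from $v_k$ to the joint goal $v_F$. Then for every subset $\Omega\subset I$ we have $g(\pi'_{\Omega}(v_k,v_F))\le g(\pi_*(v_k,v_F))$. Furthermore, if $\Omega_1\subset\Omega_2\subset I$, then $g(\pi'_{\Omega_1}(v_k,v_F))\le g(\pi'_{\Omega_2}(v_k,v_F))$.
   Context: A set of agents $I=\{1,\dots,n\}$; each agent $i$ moves in a finite graph $G^i=(V^i,E^i)$ with nonnegative edge costs and has goal $v_F^i$. The joint configuration graph is $G=\prod_{i\in I}G^i$, a joint configuration is $v_k=(v_k^i)_{i\in I}$ and $v_F=(v_F^i)_{i\in I}$. The cost $g$ of a joint path (of any subset of agents) is the sum of the costs of the individual agents' paths. Agents may collide according to a fixed collision relation between pairs of agents; a joint path for a set of agents is collision-free if no two agents of that set collide along it. For $\Omega\subseteq I$, $\pi'_\Omega(v_k,v_F)$ denotes the joint path for all of $I$ obtained by letting the agents in $\Omega$ follow a minimum-cost joint path from $v_k^\Omega$ to $v_F^\Omega$ that is collision-free among the agents of $\Omega$ (ignoring the agents outside $\Omega$), and letting each agent $i\notin\Omega$ follow an individually optimal (minimum-cost in $G^i$, ignoring all other agents) path from $v_k^i$ to $v_F^i$. *)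

theory Defs
  imports Complex_Main
begin

text \<open>
A joint path for a set S of agents is a nonempty list of joint configurations in which,
at every time step, every agent of S traverses an edge of its own graph
(i.e. a path in the product graph restricted to S); components of agents outside S
are irrelevant.
\<close>

definition joint_path ::
  "('i \<Rightarrow> 'v set) \<Rightarrow> ('i \<Rightarrow> ('v \<times> 'v) set) \<Rightarrow> 'i set
   \<Rightarrow> ('i \<Rightarrow> 'v) list \<Rightarrow> ('i \<Rightarrow> 'v) \<Rightarrow> ('i \<Rightarrow> 'v) \<Rightarrow> bool" where
  "joint_path V E S p a b \<longleftrightarrow> p \<noteq> [] \<and>
     (\<forall>i\<in>S. hd p i = a i \<and> last p i = b i \<and>
        (\<forall>t<length p. (p ! t) i \<in> V i) \<and>
        (\<forall>t. Suc t < length p \<longrightarrow> ((p ! t) i, (p ! Suc t) i) \<in> E i))"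

definition joint_cost ::
  "('i \<Rightarrow> 'v \<Rightarrow> 'v \<Rightarrow> real) \<Rightarrow> 'i set \<Rightarrow> ('i \<Rightarrow> 'v) list \<Rightarrow> real" where
  "joint_cost c S p = (\<Sum>i\<in>S. \<Sum>t<length p - 1. c i ((p ! t) i) ((p ! Suc t) i))"

text \<open>Collision relation: col i j (u,u') (w,w') means agent i moving along (u,u')
and agent j simultaneously moving along (w,w') collide.\<close>
definition collision_free ::
  "('i \<Rightarrow> 'i \<Rightarrow> 'v \<times> 'v \<Rightarrow> 'v \<times> 'v \<Rightarrow> bool) \<Rightarrow> 'i set \<Rightarrow> ('i \<Rightarrow> 'v) list \<Rightarrow> bool" where
  "collision_free col S p \<longleftrightarrow>
     (\<forall>i\<in>S. \<forall>j\<in>S. i \<noteq> j \<longrightarrow>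
        (\<forall>t. Suc t < length p \<longrightarrow> \<not> col i j ((p ! t) i, (p ! Suc t) i) ((p ! t) j, (p ! Suc t) j)))"

definition opt_joint_path where
  "opt_joint_path V E c col S a b p \<longleftrightarrow>
     joint_path V E S p a b \<and> collision_free col S p \<and>
     (\<forall>q. joint_path V E S q a b \<and> collision_free col S q \<longrightarrow>
          joint_cost c S p \<le> joint_cost c S q)"

definition indiv_path ::
  "('i \<Rightarrow> 'v set) \<Rightarrow> ('i \<Rightarrow> ('v \<times> 'v) set) \<Rightarrow> 'i \<Rightarrow> 'v list \<Rightarrow> 'v \<Rightarrow> 'v \<Rightarrow> bool" where
  "indiv_path V E i q a b \<longleftrightarrow> q \<noteq> [] \<and> hd q = a \<and> last q = b \<and> set q \<subseteq> V i \<and>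
     (\<forall>t. Suc t < length q \<longrightarrow> (q ! t, q ! Suc t) \<in> E i)"

definition indiv_cost :: "('i \<Rightarrow> 'v \<Rightarrow> 'v \<Rightarrow> real) \<Rightarrow> 'i \<Rightarrow> 'v list \<Rightarrow> real" where
  "indiv_cost c i q = (\<Sum>t<length q - 1. c i (q ! t) (q ! Suc t))"

definition opt_indiv_path where
  "opt_indiv_path V E c i q a b \<longleftrightarrow> indiv_path V E i q a b \<and>
     (\<forall>q'. indiv_path V E i q' a b \<longrightarrow> indiv_cost c i q \<le> indiv_cost c i q')"

text \<open>\<pi>'_\<Omega>(a,b): agents in \<Omega> follow a minimum-cost joint path p that is collision-free
among \<Omega>; each agent i \<in> I - \<Omega> follows an individually optimal path q i.\<close>
definition is_pi_prime where
  "is_pi_prime V E c col I \<Omega> a b \<pi> \<longleftrightarrow>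
     opt_joint_path V E c col \<Omega> a b (fst \<pi>) \<and>
     (\<forall>i\<in>I - \<Omega>. opt_indiv_path V E c i (snd \<pi> i) (a i) (b i))"

definition g_pi_prime ::
  "('i \<Rightarrow> 'v \<Rightarrow> 'v \<Rightarrow> real) \<Rightarrow> 'i set \<Rightarrow> 'i set \<Rightarrow> ('i \<Rightarrow> 'v) list \<times> ('i \<Rightarrow> 'v list) \<Rightarrow> real" where
  "g_pi_prime c I \<Omega> \<pi> = joint_cost c \<Omega> (fst \<pi>) + (\<Sum>i\<in>I - \<Omega>. indiv_cost c i (snd \<pi> i))"

end

theory Submission
  imports Defs
begin

text \<open>
An optimal joint path of \<Omega>2 is in particular a collision-free joint path of any
\<Omega>1 \<subseteq> \<Omega>2, so on \<Omega>1 it costs at least as much as an optimal joint path of \<Omega>1; and its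
projection to an agent i \<in> \<Omega>2 - \<Omega>1 is an individual path of i, so it costs at least as
much as an individually optimal one.  Summing over the agents gives monotonicity of
g(\<pi>'(\<Omega>)) in \<Omega>, and the bound by g(\<pi>*) is the case \<Omega>2 = I, where \<pi>'(I) is \<pi>* itself.
\<close>

lemma joint_path_subset:
  "joint_path V E S p a b \<Longrightarrow> S' \<subseteq> S \<Longrightarrow> joint_path V E S' p a b"
  unfolding joint_path_def by blast

lemma collision_free_subset:
  "collision_free col S p \<Longrightarrow> S' \<subseteq> S \<Longrightarrow> collision_free col S' p"
  unfolding collision_free_def by blast

lemma indiv_path_map_joint_path:
  assumes "joint_path V E S p a b" and "i \<in> S"
  shows "indiv_path V E i (map (\<lambda>x. x i) p) (a i) (b i)"
proof -
  have "set (map (\<lambda>x. x i) p) \<subseteq> V i"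
    using assms by (auto simp: joint_path_def in_set_conv_nth)
  with assms show ?thesis
    unfolding joint_path_def indiv_path_def by (simp add: hd_map last_map)
qed

lemma joint_cost_eq_sum_indiv_cost:
  "joint_cost c S p = (\<Sum>i\<in>S. indiv_cost c i (map (\<lambda>x. x i) p))"
  unfolding joint_cost_def indiv_cost_def by (intro sum.cong refl) auto

lemma opt_joint_path_cost_le_subset:
  assumes "opt_joint_path V E c col S' a b p'" "opt_joint_path V E c col S a b p" "S' \<subseteq> S"
  shows "joint_cost c S' p' \<le> joint_cost c S' p"
proof -
  have "joint_path V E S' p a b" "collision_free col S' p"
    using assms(2,3) joint_path_subset collision_free_subset
    unfolding opt_joint_path_def by blast+
  with assms(1) show ?thesis
    unfolding opt_joint_path_def by blast
qed

lemma opt_indiv_cost_le_joint_path: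
  assumes "opt_indiv_path V E c i q (a i) (b i)" "joint_path V E S p a b" "i \<in> S"
  shows "indiv_cost c i q \<le> indiv_cost c i (map (\<lambda>x. x i) p)"
  using assms(1) indiv_path_map_joint_path[OF assms(2,3)] unfolding opt_indiv_path_def by blast

lemma g_pi_prime_mono:
  assumes "finite I" "\<Omega>1 \<subseteq> \<Omega>2" "\<Omega>2 \<subseteq> I"
    and \<pi>1: "is_pi_prime V E c col I \<Omega>1 a b \<pi>1"
    and \<pi>2: "is_pi_prime V E c col I \<Omega>2 a b \<pi>2"
  shows "g_pi_prime c I \<Omega>1 \<pi>1 \<le> g_pi_prime c I \<Omega>2 \<pi>2"
proof -
  obtain p1 q1 p2 q2 where [simp]: "\<pi>1 = (p1, q1)" "\<pi>2 = (p2, q2)"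
    by (cases \<pi>1, cases \<pi>2)
  have opt1: "opt_joint_path V E c col \<Omega>1 a b p1"
    and opt2: "opt_joint_path V E c col \<Omega>2 a b p2"
    using \<pi>1 \<pi>2 by (auto simp: is_pi_prime_def)
  have fin: "finite \<Omega>2" "finite (I - \<Omega>2)"
    using assms(1,3) finite_subset by auto
  have sum_split: "(\<Sum>i\<in>I - \<Omega>1. f i) = (\<Sum>i\<in>\<Omega>2 - \<Omega>1. f i) + (\<Sum>i\<in>I - \<Omega>2. f i)" for f
  proof -
    have "I - \<Omega>1 = (\<Omega>2 - \<Omega>1) \<union> (I - \<Omega>2)" "(\<Omega>2 - \<Omega>1) \<inter> (I - \<Omega>2) = {}"
      using assms(2,3) by auto
    then show ?thesis
      using fin by (simp add: sum.union_disjoint)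
  qed
  let ?proj = "\<lambda>i. indiv_cost c i (map (\<lambda>x. x i) p2)"
  have "joint_cost c \<Omega>1 p1 \<le> joint_cost c \<Omega>1 p2"
    using opt_joint_path_cost_le_subset[OF opt1 opt2 assms(2)] .
  moreover have "(\<Sum>i\<in>\<Omega>2 - \<Omega>1. indiv_cost c i (q1 i)) \<le> (\<Sum>i\<in>\<Omega>2 - \<Omega>1. ?proj i)"
  proof (rule sum_mono)
    fix i assume "i \<in> \<Omega>2 - \<Omega>1"
    moreover have "joint_path V E \<Omega>2 p2 a b"
      using opt2 by (simp add: opt_joint_path_def)
    ultimately show "indiv_cost c i (q1 i) \<le> ?proj i"
      using \<pi>1 assms(3) by (auto simp: is_pi_prime_def intro!: opt_indiv_cost_le_joint_path)
  qed
  moreover have "(\<Sum>i\<in>I - \<Omega>2. indiv_cost c i (q1 i)) \<le> (\<Sum>i\<in>I - \<Omega>2. indiv_cost c i (q2 i))"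
    using \<pi>1 \<pi>2 assms(2) by (intro sum_mono) (auto simp: is_pi_prime_def opt_indiv_path_def)
  moreover have "joint_cost c \<Omega>2 p2 = joint_cost c \<Omega>1 p2 + (\<Sum>i\<in>\<Omega>2 - \<Omega>1. ?proj i)"
    using sum.subset_diff[OF assms(2) fin(1)] by (simp add: joint_cost_eq_sum_indiv_cost add.commute)
  moreover have "g_pi_prime c I \<Omega>1 \<pi>1 = joint_cost c \<Omega>1 p1
      + (\<Sum>i\<in>\<Omega>2 - \<Omega>1. indiv_cost c i (q1 i)) + (\<Sum>i\<in>I - \<Omega>2. indiv_cost c i (q1 i))"
    by (simp add: g_pi_prime_def sum_split)
  moreover have "g_pi_prime c I \<Omega>2 \<pi>2 = joint_cost c \<Omega>2 p2 + (\<Sum>i\<in>I - \<Omega>2. indiv_cost c i (q2 i))"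
    by (simp add: g_pi_prime_def)
  ultimately show ?thesis
    by linarith
qed

lemma is_pi_prime_all_agents:
  "opt_joint_path V E c col I a b p \<Longrightarrow> is_pi_prime V E c col I I a b (p, q)"
  by (simp add: is_pi_prime_def)

lemma g_pi_prime_all_agents: "g_pi_prime c I I (p, q) = joint_cost c I p"
  by (simp add: g_pi_prime_def)

theorem lemma8:
  fixes I :: "'i set" and V :: "'i \<Rightarrow> 'v set" and E :: "'i \<Rightarrow> ('v \<times> 'v) set"
    and c :: "'i \<Rightarrow> 'v \<Rightarrow> 'v \<Rightarrow> real"
    and col :: "'i \<Rightarrow> 'i \<Rightarrow> 'v \<times> 'v \<Rightarrow> 'v \<times> 'v \<Rightarrow> bool"
    and vk vF :: "'i \<Rightarrow> 'v" and pstar :: "('i \<Rightarrow> 'v) list"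
  assumes "finite I"
    and "\<And>i. i \<in> I \<Longrightarrow> finite (V i)"
    and "\<And>i. i \<in> I \<Longrightarrow> E i \<subseteq> V i \<times> V i"
    and "\<And>i u w. i \<in> I \<Longrightarrow> (u, w) \<in> E i \<Longrightarrow> 0 \<le> c i u w"
    and "\<And>i. i \<in> I \<Longrightarrow> vk i \<in> V i \<and> vF i \<in> V i"
    and "opt_joint_path V E c col I vk vF pstar"
  shows "(\<forall>\<Omega> \<pi>. \<Omega> \<subseteq> I \<and> is_pi_prime V E c col I \<Omega> vk vF \<pi> \<longrightarrow>
            g_pi_prime c I \<Omega> \<pi> \<le> joint_cost c I pstar)
       \<and> (\<forall>\<Omega>1 \<Omega>2 \<pi>1 \<pi>2. \<Omega>1 \<subseteq> \<Omega>2 \<and> \<Omega>2 \<subseteq> I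
            \<and> is_pi_prime V E c col I \<Omega>1 vk vF \<pi>1 \<and> is_pi_prime V E c col I \<Omega>2 vk vF \<pi>2 \<longrightarrow>
            g_pi_prime c I \<Omega>1 \<pi>1 \<le> g_pi_prime c I \<Omega>2 \<pi>2)"
proof (intro conjI allI impI)
  fix \<Omega> \<pi> assume "\<Omega> \<subseteq> I \<and> is_pi_prime V E c col I \<Omega> vk vF \<pi>"
  moreover have "is_pi_prime V E c col I I vk vF (pstar, q)" for q
    using assms(6) by (rule is_pi_prime_all_agents)
  ultimately have "g_pi_prime c I \<Omega> \<pi> \<le> g_pi_prime c I I (pstar, q)" for q
    using g_pi_prime_mono[OF assms(1) _ subset_refl] by blast
  then show "g_pi_prime c I \<Omega> \<pi> \<le> joint_cost c I pstar"
    by (simp only: g_pi_prime_all_agents)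
next
  fix \<Omega>1 \<Omega>2 \<pi>1 \<pi>2
  assume "\<Omega>1 \<subseteq> \<Omega>2 \<and> \<Omega>2 \<subseteq> I
            \<and> is_pi_prime V E c col I \<Omega>1 vk vF \<pi>1 \<and> is_pi_prime V E c col I \<Omega>2 vk vF \<pi>2"
  then show "g_pi_prime c I \<Omega>1 \<pi>1 \<le> g_pi_prime c I \<Omega>2 \<pi>2"
    using g_pi_prime_mono[OF assms(1)] by blast
qed

end
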